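(* Let $PS = D \cup LP \cup MP \cup IC$ be a maximal P2P system such that no negation occurs in $LP$. Then the relation $\sqsupseteq_{Max}$ is a partial order on the set of weak models of $PS$.
   Context: Peer atoms: a peer identifier is a positive integer; a peer atom is $i\!:\!p(t_1,\dots,t_k)$ with $i$ a peer identifier, $p$ a predicate and $t_j$ terms; $i\!:\!p$ is a peer predicate. A literal is an atom $A$ or its negation-as-failure $not\ A$. Built-in atoms are $X\,\theta\,Y$ with $\theta\in\{<,>,\le,\ge,=,\neq\}$. Rules (all safe): a standard rule $H\leftarrow \mathcal B$ with $H$ a peer atom and $\mathcal B$ a conjunction of peer literals and built-ins; an integrity constraint $\leftarrow \mathcal B$; a maximal mapping rule $i\!:\!h(X) \leftharpoonup j\!:\!(p_1(X_1),\dots,p_m(X_m),\varphi)$ with $i\neq j$; a minimal mapping rule, identical but written with $\leftharpoondown$. A peer $P_i=\langle D_i,LP_i,MP_i,IC_i\rangle$ consists of a finite set $D_i$ of ground atoms with identifier $i$, a finite set $LP_i$ of standard rules all of whose atoms have identifier $i$, a finite set $MP_i$ of mapping rules with head identifier $i$, and a finite set $IC_i$ of integrity constraints over atoms with identifier $i$. A P2P system is a set $PS=\{P_1,\dots,P_n\}$ of peers in which every source identifier of a mapping rule lies in $[1..n]$; $D,LP,MP,IC$ are the unions of the components, and $PS$ is identified with $D\cup LP\cup MP\cup IC$. A maximal P2P system is one all of whose mapping rules are maximal. A predicate is derived if it heads a standard rule, a mapping predicate if it heads a mapping rule, base otherwise; each predicate has exactly one type and each mapping predicate heads exactly one mapping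 rule. Semantics: an interpretation is a set of ground peer atoms; $A$ true iff $A\in M$, $not\ A$ true iff $A\notin M$; a standard rule is satisfied iff its body is false or its head true; a constraint iff its body is false. $MM(\Pi)$ is the set of inclusion-minimal models of a program $\Pi$ (models satisfy all ground instances). $St(r)$ turns a mapping rule with head $H$ and body $\mathcal B$ into $H\leftarrow\mathcal B$. An interpretation $M$ is a weak model of $PS$ if $\{M\}=MM(St(PS^M))$, where $PS^M$ is obtained from $ground(PS)$ by removing every rule whose body contains $not\ A$ with $A\in M$, deleting negative literals from the remaining rules, and removing every ground mapping rule whose head is not in $M$. $M[MP]$ denotes the set of atoms of $M$ whose predicate is a mapping predicate. For weak models $M,N$: $M\sqsupseteq_{Max}N$ iff $M[MP]\supseteq N[MP]$. *)

theory Defs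
  imports Main
begin

text \<open>Terms over variables 'v and constants 'c; predicates of type 'p;
  peer identifiers are natural numbers (the peers of a system are 1..n).\<close>

datatype ('v, 'c) trm = Var 'v | Const 'c

datatype cmp = Lt | Gt | Le | Ge | Eq | Neq

datatype ('p, 'v, 'c) atom = Atom nat 'p "('v, 'c) trm list"

type_synonym ('p, 'c) gatom = "nat \<times> 'p \<times> 'c list"

datatype ('p, 'v, 'c) lit = Pos "('p, 'v, 'c) atom" | Neg "('p, 'v, 'c) atom"

datatype ('v, 'c) builtin = Builtin cmp "('v, 'c) trm" "('v, 'c) trm"

datatype ('p, 'v, 'c) std_rule =
  StdRule (sr_head: "('p, 'v, 'c) atom") (sr_body: "('p, 'v, 'c) lit list")
          (sr_bis: "('v, 'c) builtin list")

datatype ('p, 'v, 'c) constr =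
  Constr (ic_body: "('p, 'v, 'c) lit list") (ic_bis: "('v, 'c) builtin list")

datatype mkind = MaxMap | MinMap

datatype ('p, 'v, 'c) map_rule =
  MapRule (mr_kind: mkind) (mr_head: "('p, 'v, 'c) atom") (mr_src: nat)
          (mr_body: "('p, 'v, 'c) atom list") (mr_bis: "('v, 'c) builtin list")

datatype ('p, 'v, 'c) peer =
  Peer (pD: "('p, 'c) gatom set") (pLP: "('p, 'v, 'c) std_rule set")
       (pMP: "('p, 'v, 'c) map_rule set") (pIC: "('p, 'v, 'c) constr set")

text \<open>A P2P system  {P_1,...,P_n}  is given by n and a function ps with
  P_i = ps i for i in {1..n}.\<close>

fun atom_id :: "('p, 'v, 'c) atom \<Rightarrow> nat" where
  "atom_id (Atom i p ts) = i"

fun atom_pred :: "('p, 'v, 'c) atom \<Rightarrow> nat \<times> 'p" where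
  "atom_pred (Atom i p ts) = (i, p)"

fun lit_atom :: "('p, 'v, 'c) lit \<Rightarrow> ('p, 'v, 'c) atom" where
  "lit_atom (Pos a) = a" | "lit_atom (Neg a) = a"

fun is_pos :: "('p, 'v, 'c) lit \<Rightarrow> bool" where
  "is_pos (Pos a) = True" | "is_pos (Neg a) = False"

fun trm_vars :: "('v, 'c) trm \<Rightarrow> 'v set" where
  "trm_vars (Var x) = {x}" | "trm_vars (Const c) = {}"

fun atom_vars :: "('p, 'v, 'c) atom \<Rightarrow> 'v set" where
  "atom_vars (Atom i p ts) = (\<Union>t\<in>set ts. trm_vars t)"

fun bi_vars :: "('v, 'c) builtin \<Rightarrow> 'v set" where
  "bi_vars (Builtin c s t) = trm_vars s \<union> trm_vars t"

definition pos_atoms :: "('p, 'v, 'c) lit list \<Rightarrow> ('p, 'v, 'c) atom list" where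
  "pos_atoms B = [a. Pos a \<leftarrow> B]"

definition neg_atoms :: "('p, 'v, 'c) lit list \<Rightarrow> ('p, 'v, 'c) atom list" where
  "neg_atoms B = [a. Neg a \<leftarrow> B]"

definition safe_std :: "('p, 'v, 'c) std_rule \<Rightarrow> bool" where
  "safe_std r \<longleftrightarrow>
     atom_vars (sr_head r) \<union> (\<Union>l\<in>set (sr_body r). atom_vars (lit_atom l))
       \<union> (\<Union>b\<in>set (sr_bis r). bi_vars b)
     \<subseteq> (\<Union>a\<in>set (pos_atoms (sr_body r)). atom_vars a)"

definition safe_ic :: "('p, 'v, 'c) constr \<Rightarrow> bool" where
  "safe_ic r \<longleftrightarrow>
     (\<Union>l\<in>set (ic_body r). atom_vars (lit_atom l)) \<union> (\<Union>b\<in>set (ic_bis r). bi_vars b)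
     \<subseteq> (\<Union>a\<in>set (pos_atoms (ic_body r)). atom_vars a)"

definition safe_map :: "('p, 'v, 'c) map_rule \<Rightarrow> bool" where
  "safe_map r \<longleftrightarrow>
     atom_vars (mr_head r) \<union> (\<Union>b\<in>set (mr_bis r). bi_vars b)
     \<subseteq> (\<Union>a\<in>set (mr_body r). atom_vars a)"

definition wf_p2p :: "nat \<Rightarrow> (nat \<Rightarrow> ('p, 'v, 'c) peer) \<Rightarrow> bool" where
  "wf_p2p n ps \<longleftrightarrow>
     (\<forall>i\<in>{1..n}.
        finite (pD (ps i)) \<and> finite (pLP (ps i)) \<and> finite (pMP (ps i)) \<and> finite (pIC (ps i))
      \<and> (\<forall>a\<in>pD (ps i). fst a = i)
      \<and> (\<forall>r\<in>pLP (ps i). atom_id (sr_head r) = i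
            \<and> (\<forall>l\<in>set (sr_body r). atom_id (lit_atom l) = i) \<and> safe_std r)
      \<and> (\<forall>r\<in>pMP (ps i). atom_id (mr_head r) = i \<and> mr_src r \<in> {1..n} \<and> mr_src r \<noteq> i
            \<and> (\<forall>a\<in>set (mr_body r). atom_id a = mr_src r) \<and> safe_map r)
      \<and> (\<forall>r\<in>pIC (ps i). (\<forall>l\<in>set (ic_body r). atom_id (lit_atom l) = i) \<and> safe_ic r))
   \<comment> \<open>each predicate has exactly one type: no predicate is both derived and mapping\<close>
   \<and> (\<forall>i\<in>{1..n}. \<forall>i'\<in>{1..n}. \<forall>r\<in>pLP (ps i). \<forall>r'\<in>pMP (ps i').
        atom_pred (sr_head r) \<noteq> atom_pred (mr_head r'))
   \<comment> \<open>each mapping predicate heads exactly one mapping rule\<close>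
   \<and> (\<forall>i\<in>{1..n}. \<forall>i'\<in>{1..n}. \<forall>r\<in>pMP (ps i). \<forall>r'\<in>pMP (ps i').
        atom_pred (mr_head r) = atom_pred (mr_head r') \<longrightarrow> i = i' \<and> r = r')"

definition maximal_p2p :: "nat \<Rightarrow> (nat \<Rightarrow> ('p, 'v, 'c) peer) \<Rightarrow> bool" where
  "maximal_p2p n ps \<longleftrightarrow> (\<forall>i\<in>{1..n}. \<forall>r\<in>pMP (ps i). mr_kind r = MaxMap)"

definition LP_negation_free :: "nat \<Rightarrow> (nat \<Rightarrow> ('p, 'v, 'c) peer) \<Rightarrow> bool" where
  "LP_negation_free n ps \<longleftrightarrow> (\<forall>i\<in>{1..n}. \<forall>r\<in>pLP (ps i). \<forall>l\<in>set (sr_body r). is_pos l)"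

text \<open>Ground rule: optional head (None = constraint), positive body atoms,
  negative body atoms, truth value of the (instantiated) built-ins, and a flag
  telling whether it is a ground mapping rule.\<close>
datatype ('p, 'c) grule =
  GRule (g_head: "('p, 'c) gatom option") (g_pos: "('p, 'c) gatom list")
        (g_neg: "('p, 'c) gatom list") (g_bis: bool) (g_map: bool)

fun trm_inst :: "('v \<Rightarrow> 'c) \<Rightarrow> ('v, 'c) trm \<Rightarrow> 'c" where
  "trm_inst \<sigma> (Var x) = \<sigma> x" | "trm_inst \<sigma> (Const c) = c"

fun atom_inst :: "('v \<Rightarrow> 'c) \<Rightarrow> ('p, 'v, 'c) atom \<Rightarrow> ('p, 'c) gatom" where
  "atom_inst \<sigma> (Atom i p ts) = (i, p, map (trm_inst \<sigma>) ts)"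

fun cmp_eval :: "cmp \<Rightarrow> 'c::linorder \<Rightarrow> 'c \<Rightarrow> bool" where
  "cmp_eval Lt x y = (x < y)" | "cmp_eval Gt x y = (x > y)"
| "cmp_eval Le x y = (x \<le> y)" | "cmp_eval Ge x y = (x \<ge> y)"
| "cmp_eval Eq x y = (x = y)" | "cmp_eval Neq x y = (x \<noteq> y)"

fun bi_eval :: "('v \<Rightarrow> 'c::linorder) \<Rightarrow> ('v, 'c) builtin \<Rightarrow> bool" where
  "bi_eval \<sigma> (Builtin c s t) = cmp_eval c (trm_inst \<sigma> s) (trm_inst \<sigma> t)"

definition ground_std :: "('v \<Rightarrow> 'c::linorder) \<Rightarrow> ('p, 'v, 'c) std_rule \<Rightarrow> ('p, 'c) grule" where
  "ground_std \<sigma> r = GRule (Some (atom_inst \<sigma> (sr_head r)))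
      (map (atom_inst \<sigma>) (pos_atoms (sr_body r))) (map (atom_inst \<sigma>) (neg_atoms (sr_body r)))
      (list_all (bi_eval \<sigma>) (sr_bis r)) False"

definition ground_ic :: "('v \<Rightarrow> 'c::linorder) \<Rightarrow> ('p, 'v, 'c) constr \<Rightarrow> ('p, 'c) grule" where
  "ground_ic \<sigma> r = GRule None
      (map (atom_inst \<sigma>) (pos_atoms (ic_body r))) (map (atom_inst \<sigma>) (neg_atoms (ic_body r)))
      (list_all (bi_eval \<sigma>) (ic_bis r)) False"

definition ground_map :: "('v \<Rightarrow> 'c::linorder) \<Rightarrow> ('p, 'v, 'c) map_rule \<Rightarrow> ('p, 'c) grule" where
  "ground_map \<sigma> r = GRule (Some (atom_inst \<sigma> (mr_head r)))
      (map (atom_inst \<sigma>) (mr_body r)) [] (list_all (bi_eval \<sigma>) (mr_bis r)) True"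

definition ground_ps :: "nat \<Rightarrow> (nat \<Rightarrow> ('p, 'v, 'c::linorder) peer) \<Rightarrow> ('p, 'c) grule set" where
  "ground_ps n ps =
     {GRule (Some a) [] [] True False | a. \<exists>i\<in>{1..n}. a \<in> pD (ps i)}
   \<union> {ground_std \<sigma> r | \<sigma> r. \<exists>i\<in>{1..n}. r \<in> pLP (ps i)}
   \<union> {ground_map \<sigma> r | \<sigma> r. \<exists>i\<in>{1..n}. r \<in> pMP (ps i)}
   \<union> {ground_ic \<sigma> r | \<sigma> r. \<exists>i\<in>{1..n}. r \<in> pIC (ps i)}"

definition reduct :: "('p, 'c) grule set \<Rightarrow> ('p, 'c) gatom set \<Rightarrow> ('p, 'c) grule set" where
  "reduct G M = {GRule h pos [] b m | h pos neg b m.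
      GRule h pos neg b m \<in> G \<and> set neg \<inter> M = {}
      \<and> (m \<longrightarrow> (\<exists>a. h = Some a \<and> a \<in> M))}"

text \<open>St: mapping rules become standard rules / constraints.\<close>
definition St :: "('p, 'c) grule set \<Rightarrow> ('p, 'c) grule set" where
  "St G = (\<lambda>r. GRule (g_head r) (g_pos r) (g_neg r) (g_bis r) False) ` G"

definition body_true :: "('p, 'c) gatom set \<Rightarrow> ('p, 'c) grule \<Rightarrow> bool" where
  "body_true I r \<longleftrightarrow> g_bis r \<and> set (g_pos r) \<subseteq> I \<and> set (g_neg r) \<inter> I = {}"

definition is_model :: "('p, 'c) grule set \<Rightarrow> ('p, 'c) gatom set \<Rightarrow> bool" where
  "is_model P I \<longleftrightarrow> (\<forall>r\<in>P. body_true I r \<longrightarrow>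
      (case g_head r of None \<Rightarrow> False | Some a \<Rightarrow> a \<in> I))"

definition MM :: "('p, 'c) grule set \<Rightarrow> ('p, 'c) gatom set set" where
  "MM P = {I. is_model P I \<and> (\<forall>J. is_model P J \<and> J \<subseteq> I \<longrightarrow> J = I)}"

definition weak_model :: "nat \<Rightarrow> (nat \<Rightarrow> ('p, 'v, 'c::linorder) peer) \<Rightarrow> ('p, 'c) gatom set \<Rightarrow> bool" where
  "weak_model n ps M \<longleftrightarrow> MM (St (reduct (ground_ps n ps) M)) = {M}"

definition mapping_preds :: "nat \<Rightarrow> (nat \<Rightarrow> ('p, 'v, 'c) peer) \<Rightarrow> (nat \<times> 'p) set" where
  "mapping_preds n ps = {atom_pred (mr_head r) | r. \<exists>i\<in>{1..n}. r \<in> pMP (ps i)}"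

definition restrict_MP :: "nat \<Rightarrow> (nat \<Rightarrow> ('p, 'v, 'c) peer) \<Rightarrow> ('p, 'c) gatom set \<Rightarrow> ('p, 'c) gatom set" where
  "restrict_MP n ps M = {a \<in> M. (fst a, fst (snd a)) \<in> mapping_preds n ps}"

definition sqsupseteq_Max :: "nat \<Rightarrow> (nat \<Rightarrow> ('p, 'v, 'c::linorder) peer) \<Rightarrow> (('p, 'c) gatom set \<times> ('p, 'c) gatom set) set" where
  "sqsupseteq_Max n ps = {(M, N). weak_model n ps M \<and> weak_model n ps N
      \<and> restrict_MP n ps M \<supseteq> restrict_MP n ps N}"

end

theory Submission
  imports Defs
begin

text \<open>If \<open>M\<close> and \<open>N\<close> are weak models with \<open>M[MP] \<subseteq> N[MP]\<close>, then \<open>M \<inter> N\<close> is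
  again a model of \<open>St(PS\<^sup>M)\<close>: without negation in \<open>LP\<close> the only rules of the
  reduct that depend on \<open>M\<close> are the ground mapping rules, and a mapping rule kept
  for \<open>M\<close> is also kept for \<open>N\<close>. Minimality of \<open>M\<close> then forces \<open>M \<subseteq> N\<close>, so
  \<open>\<sqsupseteq>\<^sub>M\<^sub>a\<^sub>x\<close> is antisymmetric; reflexivity and transitivity are inherited
  from \<open>\<supseteq>\<close>.\<close>

lemma mem_St_reduct_iff:
  "r \<in> St (reduct G M) \<longleftrightarrow> (\<exists>h pos neg b m. r = GRule h pos [] b False \<and>
     GRule h pos neg b m \<in> G \<and> set neg \<inter> M = {} \<and> (m \<longrightarrow> (\<exists>a. h = Some a \<and> a \<in> M)))"
proof
  assume "r \<in> St (reduct G M)"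
  then obtain x where "x \<in> reduct G M"
    and r: "r = GRule (g_head x) (g_pos x) (g_neg x) (g_bis x) False"
    unfolding St_def by blast
  then obtain h pos neg b m where "x = GRule h pos [] b m" "GRule h pos neg b m \<in> G"
    "set neg \<inter> M = {}" "m \<longrightarrow> (\<exists>a. h = Some a \<and> a \<in> M)"
    unfolding reduct_def by blast
  with r show "\<exists>h pos neg b m. r = GRule h pos [] b False \<and>
     GRule h pos neg b m \<in> G \<and> set neg \<inter> M = {} \<and> (m \<longrightarrow> (\<exists>a. h = Some a \<and> a \<in> M))"
    by simp blast
next
  assume "\<exists>h pos neg b m. r = GRule h pos [] b False \<and>
     GRule h pos neg b m \<in> G \<and> set neg \<inter> M = {} \<and> (m \<longrightarrow> (\<exists>a. h = Some a \<and> a \<in> M))"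
  then obtain h pos neg b m where r: "r = GRule h pos [] b False"
    and "GRule h pos neg b m \<in> G" "set neg \<inter> M = {}" "m \<longrightarrow> (\<exists>a. h = Some a \<and> a \<in> M)"
    by blast
  then have "GRule h pos [] b m \<in> reduct G M"
    unfolding reduct_def by blast
  then show "r \<in> St (reduct G M)"
    unfolding St_def r by force
qed

lemma atom_pred_atom_inst: "(fst (atom_inst \<sigma> x), fst (snd (atom_inst \<sigma> x))) = atom_pred x"
  by (cases x) auto

lemma neg_atoms_eq_Nil: "\<forall>l\<in>set B. is_pos l \<Longrightarrow> neg_atoms B = []"
  by (induction B) (auto simp: neg_atoms_def elim: is_pos.elims)

lemma ground_ps_headed_neg_free:
  assumes "LP_negation_free n ps"
    and "GRule (Some a) pos neg b m \<in> ground_ps n ps"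
  shows "neg = []"
proof -
  have "neg_atoms (sr_body r) = []" if "i \<in> {1..n}" "r \<in> pLP (ps i)" for i r
    using assms(1) that unfolding LP_negation_free_def by (blast intro: neg_atoms_eq_Nil)
  then show ?thesis
    using assms(2) unfolding ground_ps_def
    by (auto simp: ground_std_def ground_map_def ground_ic_def)
qed

lemma ground_ps_mapping_head:
  assumes "GRule (Some a) pos neg b True \<in> ground_ps n ps"
  shows "(fst a, fst (snd a)) \<in> mapping_preds n ps"
proof -
  from assms obtain \<sigma> r i where "i \<in> {1..n}" "r \<in> pMP (ps i)"
    and "a = atom_inst \<sigma> (mr_head r)"
    unfolding ground_ps_def by (auto simp: ground_std_def ground_map_def ground_ic_def)
  then have "(fst a, fst (snd a)) = atom_pred (mr_head r)"
    using atom_pred_atom_inst by simp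
  with \<open>i \<in> {1..n}\<close> \<open>r \<in> pMP (ps i)\<close> show ?thesis
    unfolding mapping_preds_def by blast
qed

lemma St_reduct_headed_rule_transfer:
  assumes "LP_negation_free n ps"
    and "restrict_MP n ps M \<subseteq> restrict_MP n ps N"
    and r: "r \<in> St (reduct (ground_ps n ps) M)"
    and "g_head r = Some a" "a \<in> M"
  shows "r \<in> St (reduct (ground_ps n ps) N)"
proof -
  from r obtain pos neg b m where r_eq: "r = GRule (Some a) pos [] b False"
    and g: "GRule (Some a) pos neg b m \<in> ground_ps n ps"
    using assms(4) unfolding mem_St_reduct_iff by auto
  have neg: "neg = []"
    using ground_ps_headed_neg_free[OF assms(1) g] .
  have head_in_N: "a \<in> N" if m
  proof -
    have "GRule (Some a) pos neg b True \<in> ground_ps n ps"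
      using g \<open>m\<close> by simp
    then have "(fst a, fst (snd a)) \<in> mapping_preds n ps"
      by (rule ground_ps_mapping_head)
    then show ?thesis
      using assms(2,5) unfolding restrict_MP_def by blast
  qed
  show ?thesis
    unfolding mem_St_reduct_iff
    using r_eq g neg head_in_N by (intro exI[of _ "Some a"] exI[of _ pos] exI[of _ neg]) auto
qed

lemma inter_is_model_St_reduct:
  assumes nf: "LP_negation_free n ps"
    and sub: "restrict_MP n ps M \<subseteq> restrict_MP n ps N"
    and "weak_model n ps M" "weak_model n ps N"
  shows "is_model (St (reduct (ground_ps n ps) M)) (M \<inter> N)"
  unfolding is_model_def
proof (intro ballI impI)
  have model_M: "is_model (St (reduct (ground_ps n ps) M)) M"
    and model_N: "is_model (St (reduct (ground_ps n ps) N)) N"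
    using assms(3,4) unfolding weak_model_def MM_def by blast+
  fix r assume r: "r \<in> St (reduct (ground_ps n ps) M)" and body: "body_true (M \<inter> N) r"
  have "g_neg r = []"
    using r unfolding mem_St_reduct_iff by auto
  with body have "body_true M r" "body_true N r"
    unfolding body_true_def by auto
  with model_M r obtain a where head: "g_head r = Some a" and "a \<in> M"
    unfolding is_model_def by (fastforce split: option.splits)
  moreover have "r \<in> St (reduct (ground_ps n ps) N)"
    using St_reduct_headed_rule_transfer[OF nf sub r head \<open>a \<in> M\<close>] .
  with model_N \<open>body_true N r\<close> head have "a \<in> N"
    unfolding is_model_def by fastforce
  ultimately show "case g_head r of None \<Rightarrow> False | Some a \<Rightarrow> a \<in> M \<inter> N"
    by simp
qed

lemma weak_model_subset_if_restrict_MP_subset: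
  assumes "LP_negation_free n ps"
    and "restrict_MP n ps M \<subseteq> restrict_MP n ps N"
    and "weak_model n ps M" "weak_model n ps N"
  shows "M \<subseteq> N"
proof -
  have "M \<in> MM (St (reduct (ground_ps n ps) M))"
    using assms(3) unfolding weak_model_def by simp
  then have "M \<inter> N = M"
    using inter_is_model_St_reduct[OF assms] unfolding MM_def by blast
  then show ?thesis by blast
qed

theorem proposition2:
  fixes n :: nat and ps :: "nat \<Rightarrow> ('p, 'v, 'c::linorder) peer"
  assumes "wf_p2p n ps"
    and "maximal_p2p n ps"
    and "LP_negation_free n ps"
  shows "partial_order_on {M. weak_model n ps M} (sqsupseteq_Max n ps)"
proof -
  have "antisym (sqsupseteq_Max n ps)"
  proof (rule antisymI)
    fix M N assume "(M, N) \<in> sqsupseteq_Max n ps" "(N, M) \<in> sqsupseteq_Max n ps"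
    then show "M = N"
      unfolding sqsupseteq_Max_def
      using weak_model_subset_if_restrict_MP_subset[OF assms(3)] by (simp add: subset_antisym)
  qed
  moreover have "sqsupseteq_Max n ps \<subseteq> {M. weak_model n ps M} \<times> {M. weak_model n ps M}"
    unfolding sqsupseteq_Max_def by blast
  moreover have "refl_on {M. weak_model n ps M} (sqsupseteq_Max n ps)"
    unfolding refl_on_def sqsupseteq_Max_def by blast
  moreover have "trans (sqsupseteq_Max n ps)"
    unfolding trans_def sqsupseteq_Max_def by blast
  ultimately show ?thesis
    unfolding partial_order_on_def preorder_on_def by blast
qed

end
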